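(* Let $\mathcal{D}$ be an open derivation and let $\mathsf{S}(\mathcal{D})$ be the maximum number of $?$-formulas in the conclusion of a $\mathsf{cp}$ rule of $\mathcal{D}$. If $\mathcal{D}= \mathcal{D}_0 \to_{\mathsf{cut}} \cdots \to_{\mathsf{cut}}\mathcal{D}_n$ then: \begin{enumerate} \item $n$ and $|\mathcal{D}_i|$ are in $\mathcal{O}(\mathsf{S}(\mathcal{D})^3\cdot| \mathcal{D} |^3)$ for any $i\in\{0,\dots,n\}$. \item If only principal cut-elimination steps are applied then $n$ and $|\mathcal{D}_i|$ are in $\mathcal{O}(\mathsf{S}(\mathcal{D})\cdot| \mathcal{D} |)$ for any $i\in\{0,\dots,n\}$. \item If the reduction sequence is maximal then $\mathcal{D}_n$ is cut free. \end{enumerate}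
   Context: Formulas: $A ::= X \mid X^\perp \mid A\otimes A \mid A ⅋ A \mid {!A} \mid {?A} \mid \mathbf{1} \mid \bot \mid \forall X.A \mid \exists X.A$. The rules are axiom, cut, $\otimes$, $⅋$, $\mathbf{1}$, $\bot$, weakening $?\mathsf{w}$ (from $\Gamma$ infer $\Gamma,?A$), absorption $?\mathsf{b}$ (from $\Gamma,A,?A$ infer $\Gamma,?A$), $\forall$, $\exists$ (instantiating only $(!,?)$-free formulas), conditional promotion $\mathsf{cp}$ (from $\Gamma,A$ and $?\Gamma,!A$ infer $?\Gamma,!A$), plus the rule $\mathsf{hyp}$ with no premises and arbitrary conclusion. An open derivation is a finite derivation over these rules; $|\mathcal{D}|$ is its number of rule instances. Cut-elimination $\to_{\mathsf{cut}}$: standard multiplicative, second-order and commutative steps (the latter permute a cut above a non-cut rule), and principal exponential steps: cut of two $\mathsf{cp}$ rules becomes a $\mathsf{cp}$ whose premises are the cuts of the respective left and right premises; cut of $\mathsf{cp}$ (conclusion $?\Gamma,!A$) against $?\mathsf{w}$ on $?A^\perp$ becomes $|\Gamma|$ weakenings; cut of $\mathsf{cp}$ against $?\mathsf{b}$ (premise $\Delta,A^\perp,?A^\perp$) becomes a cut of the left premise $\Gamma,A$ against $A^\perp$ and of the right premise $?\Gamma,!A$ against $?A^\perp$, followed by $|\Gamma|$ absorptions. Non-commutative steps are called principal. *)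

theory Defs
  imports Main "HOL-Library.Multiset"
begin

section \<open>Formulas of second-order MELL (de Bruijn indices for type variables)\<close>

text \<open>Var n is the propositional variable X with de Bruijn index n, NVar n its
  negation X-perp.  All A and Ex A bind index 0 in A.\<close>

datatype form =
    Var nat | NVar nat
  | Tens form form | Par form form
  | Bang form | Wn form
  | One | Bot
  | All form | Ex form

fun dual :: "form \<Rightarrow> form" where
  "dual (Var n) = NVar n"
| "dual (NVar n) = Var n"
| "dual (Tens A B) = Par (dual A) (dual B)"
| "dual (Par A B) = Tens (dual A) (dual B)"
| "dual (Bang A) = Wn (dual A)"
| "dual (Wn A) = Bang (dual A)"
| "dual One = Bot"
| "dual Bot = One"
| "dual (All A) = Ex (dual A)"
| "dual (Ex A) = All (dual A)"

fun lift :: "nat \<Rightarrow> form \<Rightarrow> form" where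
  "lift k (Var n) = Var (if n < k then n else Suc n)"
| "lift k (NVar n) = NVar (if n < k then n else Suc n)"
| "lift k (Tens A B) = Tens (lift k A) (lift k B)"
| "lift k (Par A B) = Par (lift k A) (lift k B)"
| "lift k (Bang A) = Bang (lift k A)"
| "lift k (Wn A) = Wn (lift k A)"
| "lift k One = One"
| "lift k Bot = Bot"
| "lift k (All A) = All (lift (Suc k) A)"
| "lift k (Ex A) = Ex (lift (Suc k) A)"

fun subst :: "nat \<Rightarrow> form \<Rightarrow> form \<Rightarrow> form" where
  "subst k C (Var n) = (if n < k then Var n else if n = k then C else Var (n - 1))"
| "subst k C (NVar n) = (if n < k then NVar n else if n = k then dual C else NVar (n - 1))"
| "subst k C (Tens A B) = Tens (subst k C A) (subst k C B)"
| "subst k C (Par A B) = Par (subst k C A) (subst k C B)"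
| "subst k C (Bang A) = Bang (subst k C A)"
| "subst k C (Wn A) = Wn (subst k C A)"
| "subst k C One = One"
| "subst k C Bot = Bot"
| "subst k C (All A) = All (subst (Suc k) (lift 0 C) A)"
| "subst k C (Ex A) = Ex (subst (Suc k) (lift 0 C) A)"

text \<open>(!,?)-free formulas (the only admissible witnesses of the exists-rule).\<close>
fun exp_free :: "form \<Rightarrow> bool" where
  "exp_free (Var n) = True"
| "exp_free (NVar n) = True"
| "exp_free (Tens A B) = (exp_free A \<and> exp_free B)"
| "exp_free (Par A B) = (exp_free A \<and> exp_free B)"
| "exp_free (Bang A) = False"
| "exp_free (Wn A) = False"
| "exp_free One = True"
| "exp_free Bot = True"
| "exp_free (All A) = exp_free A"
| "exp_free (Ex A) = exp_free A"

fun is_Wn :: "form \<Rightarrow> bool" where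
  "is_Wn (Wn A) = True"
| "is_Wn _ = False"

section \<open>Open derivations\<close>

text \<open>Rule labels record the principal / cut formulas:
  RCut A : cut on A (left premise contains A, right premise contains dual A);
  RTens A B, RPar A B : principal formula Tens A B / Par A B;
  RWk A, RAbs A : principal formula Wn A;
  RAll A : principal formula All A;  REx A B : principal formula Ex A, witness B;
  RCp A : conditional promotion with principal formula Bang A;
  RHyp : the hypothesis rule (no premises, arbitrary conclusion).\<close>
datatype rule =
    RAx | RCut form | RTens form form | RPar form form | ROne | RBot
  | RWk form | RAbs form | RAll form | REx form form | RCp form | RHyp

datatype deriv = Der rule "form multiset" "deriv list"

fun concl :: "deriv \<Rightarrow> form multiset" where
  "concl (Der r G ps) = G"

fun rule_ok :: "rule \<Rightarrow> form multiset \<Rightarrow> form multiset list \<Rightarrow> bool" where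
  "rule_ok RAx G cs = (cs = [] \<and> (\<exists>n. G = {#Var n, NVar n#}))"
| "rule_ok (RCut A) G cs = (\<exists>\<Gamma> \<Delta>. cs = [\<Gamma> + {#A#}, \<Delta> + {#dual A#}] \<and> G = \<Gamma> + \<Delta>)"
| "rule_ok (RTens A B) G cs = (\<exists>\<Gamma> \<Delta>. cs = [\<Gamma> + {#A#}, \<Delta> + {#B#}] \<and> G = \<Gamma> + \<Delta> + {#Tens A B#})"
| "rule_ok (RPar A B) G cs = (\<exists>\<Gamma>. cs = [\<Gamma> + {#A, B#}] \<and> G = \<Gamma> + {#Par A B#})"
| "rule_ok ROne G cs = (cs = [] \<and> G = {#One#})"
| "rule_ok RBot G cs = (\<exists>\<Gamma>. cs = [\<Gamma>] \<and> G = \<Gamma> + {#Bot#})"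
| "rule_ok (RWk A) G cs = (\<exists>\<Gamma>. cs = [\<Gamma>] \<and> G = \<Gamma> + {#Wn A#})"
| "rule_ok (RAbs A) G cs = (\<exists>\<Gamma>. cs = [\<Gamma> + {#A, Wn A#}] \<and> G = \<Gamma> + {#Wn A#})"
| "rule_ok (RAll A) G cs = (\<exists>\<Gamma>. cs = [image_mset (lift 0) \<Gamma> + {#A#}] \<and> G = \<Gamma> + {#All A#})"
| "rule_ok (REx A B) G cs = (exp_free B \<and> (\<exists>\<Gamma>. cs = [\<Gamma> + {#subst 0 B A#}] \<and> G = \<Gamma> + {#Ex A#}))"
| "rule_ok (RCp A) G cs = (\<exists>\<Gamma>. cs = [\<Gamma> + {#A#}, image_mset Wn \<Gamma> + {#Bang A#}]
                                 \<and> G = image_mset Wn \<Gamma> + {#Bang A#})"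
| "rule_ok RHyp G cs = (cs = [])"

inductive valid :: "deriv \<Rightarrow> bool" where
  "rule_ok r G (map concl ps) \<Longrightarrow> (\<forall>p\<in>set ps. valid p) \<Longrightarrow> valid (Der r G ps)"

fun dsize :: "deriv \<Rightarrow> nat" where
  "dsize (Der r G ps) = Suc (sum_list (map dsize ps))"

fun nodes :: "deriv \<Rightarrow> (rule \<times> form multiset) list" where
  "nodes (Der r G ps) = (r, G) # concat (map nodes ps)"

definition S :: "deriv \<Rightarrow> nat" where
  "S D = Max (insert 0 {size (filter_mset is_Wn G) | A G. (RCp A, G) \<in> set (nodes D)})"

fun is_cut :: "rule \<Rightarrow> bool" where
  "is_cut (RCut A) = True"
| "is_cut _ = False"

definition cut_free :: "deriv \<Rightarrow> bool" where
  "cut_free D \<longleftrightarrow> (\<forall>(r, G) \<in> set (nodes D). \<not> is_cut r)"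

fun rlift :: "nat \<Rightarrow> rule \<Rightarrow> rule" where
  "rlift k RAx = RAx"
| "rlift k (RCut A) = RCut (lift k A)"
| "rlift k (RTens A B) = RTens (lift k A) (lift k B)"
| "rlift k (RPar A B) = RPar (lift k A) (lift k B)"
| "rlift k ROne = ROne"
| "rlift k RBot = RBot"
| "rlift k (RWk A) = RWk (lift k A)"
| "rlift k (RAbs A) = RAbs (lift k A)"
| "rlift k (RAll A) = RAll (lift (Suc k) A)"
| "rlift k (REx A B) = REx (lift (Suc k) A) (lift k B)"
| "rlift k (RCp A) = RCp (lift k A)"
| "rlift k RHyp = RHyp"

fun rsubst :: "nat \<Rightarrow> form \<Rightarrow> rule \<Rightarrow> rule" where
  "rsubst k C RAx = RAx"
| "rsubst k C (RCut A) = RCut (subst k C A)"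
| "rsubst k C (RTens A B) = RTens (subst k C A) (subst k C B)"
| "rsubst k C (RPar A B) = RPar (subst k C A) (subst k C B)"
| "rsubst k C ROne = ROne"
| "rsubst k C RBot = RBot"
| "rsubst k C (RWk A) = RWk (subst k C A)"
| "rsubst k C (RAbs A) = RAbs (subst k C A)"
| "rsubst k C (RAll A) = RAll (subst (Suc k) (lift 0 C) A)"
| "rsubst k C (REx A B) = REx (subst (Suc k) (lift 0 C) A) (subst k C B)"
| "rsubst k C (RCp A) = RCp (subst k C A)"
| "rsubst k C RHyp = RHyp"

fun is_All_rule :: "rule \<Rightarrow> bool" where
  "is_All_rule (RAll A) = True"
| "is_All_rule _ = False"

text \<open>Shift free variables (index >= k) of a whole derivation; premises of a
  forall-rule live under one more binder.\<close>
fun dlift :: "nat \<Rightarrow> deriv \<Rightarrow> deriv" where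
  "dlift k (Der r G ps) =
     Der (rlift k r) (image_mset (lift k) G)
         (map (\<lambda>p. dlift (if is_All_rule r then Suc k else k) p) ps)"

fun dsubst :: "nat \<Rightarrow> form \<Rightarrow> deriv \<Rightarrow> deriv" where
  "dsubst k C (Der r G ps) =
     Der (rsubst k C r) (image_mset (subst k C) G)
         (map (\<lambda>p. dsubst (if is_All_rule r then Suc k else k)
                             (if is_All_rule r then lift 0 C else C) p) ps)"

section \<open>Cut-elimination steps\<close>

definition mk_cut :: "form \<Rightarrow> deriv \<Rightarrow> deriv \<Rightarrow> deriv" where
  "mk_cut A p q = Der (RCut A) ((concl p - {#A#}) + (concl q - {#dual A#})) [p, q]"

fun wk_list :: "form list \<Rightarrow> deriv \<Rightarrow> deriv" where
  "wk_list [] d = d"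
| "wk_list (w # ws) d = (let d' = wk_list ws d in Der (RWk w) (concl d' + {#Wn w#}) [d'])"

fun abs_list :: "form list \<Rightarrow> deriv \<Rightarrow> deriv" where
  "abs_list [] d = d"
| "abs_list (w # ws) d = (let d' = abs_list ws d in Der (RAbs w) (concl d' - {#w#}) [d'])"

text \<open>The Boolean flag is True for principal
  (i.e. non-commutative) steps and False for commutative steps.
  In each case the left premise D1 carries the cut formula A and the right
  premise D2 carries dual A; the last rule allows both orientations.\<close>
inductive root_step :: "bool \<Rightarrow> deriv \<Rightarrow> deriv \<Rightarrow> bool" where
  ax: "concl D1 = {#A, dual A#} \<Longrightarrow> D1 = Der RAx (concl D1) [] \<Longrightarrow>
       root_step True (Der (RCut A) G [D1, D2]) D2"
| tens_par: "root_step True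
      (Der (RCut (Tens B C)) G [Der (RTens B C) G1 [p, q], Der (RPar (dual B) (dual C)) G2 [r]])
      (mk_cut C q (mk_cut B p r))"
| one_bot: "root_step True (Der (RCut One) G [Der ROne G1 [], Der RBot G2 [r]]) r"
| all_ex: "root_step True
      (Der (RCut (All B)) G [Der (RAll B) G1 [p], Der (REx (dual B) C) G2 [r]])
      (mk_cut (subst 0 C B) (dsubst 0 C p) r)"
| cp_cp: "root_step True
      (Der (RCut (Wn E)) G [Der (RCp B) G1 [p1, p2], Der (RCp (dual E)) G2 [q1, q2]])
      (Der (RCp B) G [mk_cut E p1 q1, mk_cut (Wn E) p2 q2])"
| cp_wk: "image_mset Wn (mset ws) = G1 - {#Bang B#} \<Longrightarrow> root_step True
      (Der (RCut (Bang B)) G [Der (RCp B) G1 [p1, p2], Der (RWk (dual B)) G2 [r]])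
      (wk_list ws r)"
| cp_abs1: "image_mset Wn (mset ws) = G1 - {#Bang B#} \<Longrightarrow> root_step True
      (Der (RCut (Bang B)) G [Der (RCp B) G1 [p1, p2], Der (RAbs (dual B)) G2 [r]])
      (abs_list ws (mk_cut B p1 (mk_cut (Bang B) p2 r)))"
| cp_abs2: "image_mset Wn (mset ws) = G1 - {#Bang B#} \<Longrightarrow> root_step True
      (Der (RCut (Bang B)) G [Der (RCp B) G1 [p1, p2], Der (RAbs (dual B)) G2 [r]])
      (abs_list ws (mk_cut (Bang B) p2 (mk_cut B p1 r)))"
  \<comment> \<open>commutative steps: permute the cut above the last (non-cut, non-cp) rule of D1,
     when the cut formula A belongs to the context of that rule\<close>
| c_tens1: "A \<in># concl p - {#B#} \<Longrightarrow> root_step False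
      (Der (RCut A) G [Der (RTens B C) G1 [p, q], D2])
      (Der (RTens B C) G [mk_cut A p D2, q])"
| c_tens2: "A \<in># concl q - {#C#} \<Longrightarrow> root_step False
      (Der (RCut A) G [Der (RTens B C) G1 [p, q], D2])
      (Der (RTens B C) G [p, mk_cut A q D2])"
| c_par: "A \<in># concl p - {#B, C#} \<Longrightarrow> root_step False
      (Der (RCut A) G [Der (RPar B C) G1 [p], D2])
      (Der (RPar B C) G [mk_cut A p D2])"
| c_bot: "A \<in># concl p \<Longrightarrow> root_step False
      (Der (RCut A) G [Der RBot G1 [p], D2])
      (Der RBot G [mk_cut A p D2])"
| c_wk: "A \<in># concl p \<Longrightarrow> root_step False
      (Der (RCut A) G [Der (RWk B) G1 [p], D2])
      (Der (RWk B) G [mk_cut A p D2])"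
| c_abs: "A \<in># concl p - {#B, Wn B#} \<Longrightarrow> root_step False
      (Der (RCut A) G [Der (RAbs B) G1 [p], D2])
      (Der (RAbs B) G [mk_cut A p D2])"
| c_ex: "A \<in># concl p - {#subst 0 C B#} \<Longrightarrow> root_step False
      (Der (RCut A) G [Der (REx B C) G1 [p], D2])
      (Der (REx B C) G [mk_cut A p D2])"
| c_all: "A \<in># G1 - {#All B#} \<Longrightarrow> root_step False
      (Der (RCut A) G [Der (RAll B) G1 [p], D2])
      (Der (RAll B) G [mk_cut (lift 0 A) p (dlift 0 D2)])"
| c_hyp: "A \<in># G1 \<Longrightarrow> root_step False
      (Der (RCut A) G [Der RHyp G1 [], D2])
      (Der RHyp G [])"
| sym: "root_step b (Der (RCut (dual A)) G [D2, D1]) D' \<Longrightarrow>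
        root_step b (Der (RCut A) G [D1, D2]) D'"

inductive step :: "bool \<Rightarrow> deriv \<Rightarrow> deriv \<Rightarrow> bool" where
  root: "root_step b D D' \<Longrightarrow> step b D D'"
| ctxt: "i < length ps \<Longrightarrow> step b (ps ! i) D' \<Longrightarrow>
         step b (Der r G ps) (Der r G (ps[i := D']))"

definition cut_step :: "deriv \<Rightarrow> deriv \<Rightarrow> bool" where
  "cut_step D D' \<longleftrightarrow> step True D D' \<or> step False D D'"

definition principal_step :: "deriv \<Rightarrow> deriv \<Rightarrow> bool" where
  "principal_step D D' \<longleftrightarrow> step True D D'"

definition red_seq :: "(deriv \<Rightarrow> deriv \<Rightarrow> bool) \<Rightarrow> deriv list \<Rightarrow> bool" where
  "red_seq R Ds \<longleftrightarrow> Ds \<noteq> [] \<and> (\<forall>i. Suc i < length Ds \<longrightarrow> R (Ds ! i) (Ds ! Suc i))"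

end

theory Submission
  imports Defs
begin

text \<open>
  Cut elimination preserves conclusions, provided validity is relaxed to allow non-atomic
  axioms (the second-order step substitutes formulas into axioms).

  Principal steps strictly decrease the weight |D| + (number of ?-formulas in conclusions of
  cp rules). In a cp/? step the promotion disappears and the at most |Gamma| new weakenings or
  absorptions are paid for by its context ?Gamma; in the cp/cp step the merged promotion has one
  ?-formula less than the two it replaces. Commutative steps increase neither |D| nor the weight,
  and strictly decrease the cut weight, the sum over all cuts of the size of the derivation
  ending in that cut, which is at most |D|^2. So with W the initial weight, which is at most
  (S(D) + 1) |D|, the potential weight * (W^2 + 1) + cut weight drops along every step and
  bounds the length of any reduction sequence by O(W^3).

  A cut whose premises are cut free can always be reduced: either the cut formula lies in the
  context of the last rule of a premise, and the cut commutes upwards, or it is principal on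
  both sides, and a principal step applies.
\<close>

lemma dual_dual[simp]: "dual (dual A) = A"
  by (induct A) auto

lemma lift_dual: "lift k (dual A) = dual (lift k A)"
  by (induct A arbitrary: k) auto

lemma subst_dual: "subst k C (dual A) = dual (subst k C A)"
  by (induct A arbitrary: k C) (auto simp: lift_dual)

lemma lift_lift: "j \<le> k \<Longrightarrow> lift (Suc k) (lift j A) = lift j (lift k A)"
  by (induct A arbitrary: j k) auto

lemma lift_0_lift: "lift 0 (lift j A) = lift (Suc j) (lift 0 A)"
  using lift_lift[of 0 j A] by simp

lemma subst_lift_cancel: "subst j B (lift j A) = A"
  by (induct A arbitrary: j B) auto

lemma subst_lift: "j \<le> k \<Longrightarrow> subst (Suc k) (lift j C) (lift j A) = lift j (subst k C A)"
proof (induct A arbitrary: j k C)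
  case (All A)
  then show ?case using All(1)[of "Suc j" "Suc k" "lift 0 C"] by (simp add: lift_0_lift)
next
  case (Ex A)
  then show ?case using Ex(1)[of "Suc j" "Suc k" "lift 0 C"] by (simp add: lift_0_lift)
qed (auto simp: lift_dual)

lemma lift_subst: "j \<le> k \<Longrightarrow> lift k (subst j B A) = subst j (lift k B) (lift (Suc k) A)"
proof (induct A arbitrary: j k B)
  case (All A)
  then show ?case using All(1)[of "Suc j" "Suc k" "lift 0 B"] by (simp add: lift_0_lift)
next
  case (Ex A)
  then show ?case using Ex(1)[of "Suc j" "Suc k" "lift 0 B"] by (simp add: lift_0_lift)
qed (auto simp: lift_dual)

lemma subst_subst:
  "subst (j + k) C (subst j B A) = subst j (subst (j + k) C B) (subst (Suc (j + k)) (lift j C) A)"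
proof (induct A arbitrary: j k B C)
  case (All A)
  then show ?case using All[where j="Suc j" and k=k and B="lift 0 B" and C="lift 0 C"]
    by (simp add: subst_lift[of 0, simplified] lift_0_lift)
next
  case (Ex A)
  then show ?case using Ex[where j="Suc j" and k=k and B="lift 0 B" and C="lift 0 C"]
    by (simp add: subst_lift[of 0, simplified] lift_0_lift)
qed (auto simp: subst_lift_cancel subst_dual lift_dual)

section \<open>Subject reduction\<close>

text \<open>Validity is not preserved by the second-order step, which substitutes formulas into axioms.
  The relaxed rules allow axioms on arbitrary formulas and drop the side condition on existential
  witnesses, on which nothing below depends.\<close>

fun rule_ok_gen :: "rule \<Rightarrow> form multiset \<Rightarrow> form multiset list \<Rightarrow> bool" where
  "rule_ok_gen RAx G cs = (cs = [] \<and> (\<exists>X. G = {#X, dual X#}))"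
| "rule_ok_gen (REx A B) G cs = (\<exists>\<Gamma>. cs = [\<Gamma> + {#subst 0 B A#}] \<and> G = \<Gamma> + {#Ex A#})"
| "rule_ok_gen r G cs = rule_ok r G cs"

fun valid_gen :: "deriv \<Rightarrow> bool" where
  "valid_gen (Der r G ps) \<longleftrightarrow> rule_ok_gen r G (map concl ps) \<and> (\<forall>p\<in>set ps. valid_gen p)"

lemma rule_ok_imp_rule_ok_gen: "rule_ok r G cs \<Longrightarrow> rule_ok_gen r G cs"
  by (cases r) (auto, metis dual.simps(1))

lemma valid_imp_valid_gen: "valid D \<Longrightarrow> valid_gen D"
  by (induct rule: valid.induct) (simp add: rule_ok_imp_rule_ok_gen)

lemma concl_dsubst[simp]: "concl (dsubst k C D) = image_mset (subst k C) (concl D)"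
  by (cases D) auto

lemma concl_dlift[simp]: "concl (dlift k D) = image_mset (lift k) (concl D)"
  by (cases D) auto

lemma rule_ok_gen_rsubst:
  assumes "rule_ok_gen r G cs"
  shows "rule_ok_gen (rsubst k C r) (image_mset (subst k C) G)
     (map (image_mset (subst (if is_All_rule r then Suc k else k) (if is_All_rule r then lift 0 C else C))) cs)"
  using assms
  by (cases r) (auto simp: subst_dual subst_lift[of 0, simplified] multiset.map_comp o_def
      subst_subst[of 0 k, simplified])

lemma rule_ok_gen_rlift:
  assumes "rule_ok_gen r G cs"
  shows "rule_ok_gen (rlift k r) (image_mset (lift k) G)
     (map (image_mset (lift (if is_All_rule r then Suc k else k))) cs)"
  using assms
  by (cases r) (auto simp: lift_dual lift_0_lift multiset.map_comp o_def lift_subst[of 0 k, simplified])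

lemma valid_gen_dsubst: "valid_gen D \<Longrightarrow> valid_gen (dsubst k C D)"
proof (induct D arbitrary: k C)
  case (Der r G ps)
  then show ?case
    using rule_ok_gen_rsubst[of r G "map concl ps" k C] by (simp add: o_def)
qed

lemma valid_gen_dlift: "valid_gen D \<Longrightarrow> valid_gen (dlift k D)"
proof (induct D arbitrary: k)
  case (Der r G ps)
  then show ?case
    using rule_ok_gen_rlift[of r G "map concl ps" k] by (simp add: o_def)
qed

lemma valid_gen_cut_iff:
  "valid_gen (Der (RCut A) G [D1, D2]) \<longleftrightarrow>
     valid_gen D1 \<and> valid_gen D2 \<and> A \<in># concl D1 \<and> dual A \<in># concl D2 \<and>
     G = (concl D1 - {#A#}) + (concl D2 - {#dual A#})"
  by (auto dest!: multi_member_split)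

lemma valid_gen_mk_cut[simp]:
  "valid_gen (mk_cut A p q) \<longleftrightarrow> valid_gen p \<and> valid_gen q \<and> A \<in># concl p \<and> dual A \<in># concl q"
  unfolding mk_cut_def valid_gen_cut_iff by simp

lemma concl_mk_cut[simp]: "concl (mk_cut A p q) = (concl p - {#A#}) + (concl q - {#dual A#})"
  by (simp add: mk_cut_def)

lemma valid_gen_wk_list:
  "valid_gen d \<Longrightarrow> valid_gen (wk_list ws d) \<and> concl (wk_list ws d) = concl d + image_mset Wn (mset ws)"
  by (induct ws) (auto simp: Let_def)

lemma valid_gen_abs_list:
  "valid_gen d \<Longrightarrow> concl d = mset ws + image_mset Wn (mset ws) + \<Delta> \<Longrightarrow>
     valid_gen (abs_list ws d) \<and> concl (abs_list ws d) = image_mset Wn (mset ws) + \<Delta>"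
proof (induct ws arbitrary: \<Delta>)
  case (Cons w ws)
  then have "valid_gen (abs_list ws d) \<and> concl (abs_list ws d) = image_mset Wn (mset ws) + ({#w, Wn w#} + \<Delta>)"
    by (simp add: ac_simps)
  then show ?case by (auto simp: Let_def)
qed simp

lemma valid_gen_cut_swap:
  "valid_gen (Der (RCut (dual A)) G [D2, D1]) \<longleftrightarrow> valid_gen (Der (RCut A) G [D1, D2])"
  by (auto simp: valid_gen_cut_iff ac_simps)

lemma image_mset_Wn_eq_iff[simp]: "image_mset Wn X = image_mset Wn Y \<longleftrightarrow> X = Y"
proof -
  have "inj Wn"
    by (rule injI) simp
  then show ?thesis
    by (metis multiset.inj_map inj_eq)
qed

lemma image_mset_subst_lift_cancel[simp]: "image_mset (subst k C) (image_mset (lift k) X) = X"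
  by (simp add: multiset.map_comp o_def subst_lift_cancel)

lemma valid_gen_cut_cp_cpE:
  assumes "valid_gen (Der (RCut (Wn E)) G [Der (RCp B) G1 [p1, p2], Der (RCp (dual E)) G2 [q1, q2]])"
  obtains \<Gamma>1 \<Gamma>2 where
    "valid_gen p1" "concl p1 = add_mset B (add_mset E \<Gamma>1)" "valid_gen p2" "concl p2 = G1"
    "valid_gen q1" "concl q1 = add_mset (dual E) \<Gamma>2" "valid_gen q2" "concl q2 = G2"
    "G1 = add_mset (Bang B) (image_mset Wn (add_mset E \<Gamma>1))"
    "G2 = add_mset (Bang (dual E)) (image_mset Wn \<Gamma>2)"
    "G = add_mset (Bang B) (image_mset Wn (\<Gamma>1 + \<Gamma>2))"
proof -
  from assms have cut:
      "valid_gen (Der (RCp B) G1 [p1, p2])" "valid_gen (Der (RCp (dual E)) G2 [q1, q2])"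
      "Wn E \<in># G1" "G = G1 - {#Wn E#} + (G2 - {#Bang (dual E)#})"
    unfolding valid_gen_cut_iff by auto
  then obtain \<Gamma>1 \<Gamma>2 where
      "valid_gen p1" "concl p1 = add_mset B \<Gamma>1" "G1 = add_mset (Bang B) (image_mset Wn \<Gamma>1)"
      "valid_gen p2" "concl p2 = G1" "valid_gen q1" "concl q1 = add_mset (dual E) \<Gamma>2"
      "G2 = add_mset (Bang (dual E)) (image_mset Wn \<Gamma>2)" "valid_gen q2" "concl q2 = G2"
    by auto
  moreover from cut(3) this obtain \<Gamma>1' where "\<Gamma>1 = add_mset E \<Gamma>1'"
    by (auto dest: multi_member_split)
  ultimately show ?thesis
    using that cut(4) by simp
qed

lemma valid_gen_cut_cp_absE:
  assumes "valid_gen (Der (RCut (Bang B)) G [Der (RCp B) G1 [p1, p2], Der (RAbs (dual B)) G2 [r]])"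
    and "image_mset Wn (mset ws) = G1 - {#Bang B#}"
  obtains \<Delta> where "valid_gen p1" "concl p1 = add_mset B (mset ws)"
    "valid_gen p2" "concl p2 = add_mset (Bang B) (image_mset Wn (mset ws))"
    "valid_gen r" "concl r = add_mset (dual B) (add_mset (Wn (dual B)) \<Delta>)"
    "G = image_mset Wn (mset ws) + \<Delta>"
proof -
  from assms(1) have cut:
      "valid_gen (Der (RCp B) G1 [p1, p2])" "valid_gen (Der (RAbs (dual B)) G2 [r])"
      "G = G1 - {#Bang B#} + (G2 - {#Wn (dual B)#})"
    unfolding valid_gen_cut_iff by auto
  from cut(1) obtain \<Gamma> where p:
      "valid_gen p1" "concl p1 = add_mset B \<Gamma>" "valid_gen p2" "concl p2 = G1"
      "G1 = add_mset (Bang B) (image_mset Wn \<Gamma>)"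
    by auto
  with assms(2) have "\<Gamma> = mset ws"
    by simp
  moreover from cut(2) obtain \<Delta> where
      "valid_gen r" "concl r = add_mset (dual B) (add_mset (Wn (dual B)) \<Delta>)"
      "G2 = add_mset (Wn (dual B)) \<Delta>"
    by auto
  ultimately show ?thesis
    using that cut(3) p by simp
qed

lemma root_step_preserves_valid_gen:
  "root_step b D D' \<Longrightarrow> valid_gen D \<Longrightarrow> valid_gen D' \<and> concl D' = concl D"
proof (induct rule: root_step.induct)
  case (all_ex B G G1 p C G2 r)
  then show ?case
    by (auto simp: valid_gen_cut_iff subst_dual valid_gen_dsubst dest!: multi_member_split)
next
  case (cp_cp E G B G1 p1 p2 G2 q1 q2)
  then obtain \<Gamma>1 \<Gamma>2 where
      "valid_gen p1" "concl p1 = add_mset B (add_mset E \<Gamma>1)" "valid_gen p2" "concl p2 = G1"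
      "valid_gen q1" "concl q1 = add_mset (dual E) \<Gamma>2" "valid_gen q2" "concl q2 = G2"
      "G1 = add_mset (Bang B) (image_mset Wn (add_mset E \<Gamma>1))"
      "G2 = add_mset (Bang (dual E)) (image_mset Wn \<Gamma>2)"
      "G = add_mset (Bang B) (image_mset Wn (\<Gamma>1 + \<Gamma>2))"
    by (rule valid_gen_cut_cp_cpE)
  then show ?case
    by (simp add: exI[of _ "\<Gamma>1 + \<Gamma>2"])
next
  case (cp_wk ws G1 B G p1 p2 G2 r)
  then obtain \<Gamma> where "valid_gen r" "G2 = add_mset (Wn (dual B)) (concl r)"
      "G1 = add_mset (Bang B) \<Gamma>" "G = \<Gamma> + concl r"
    unfolding valid_gen_cut_iff by auto
  with cp_wk(1) show ?case
    using valid_gen_wk_list[of r ws] by (simp add: ac_simps)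
next
  case (cp_abs1 ws G1 B G p1 p2 G2 r)
  obtain \<Delta> where "valid_gen p1" "concl p1 = add_mset B (mset ws)"
    "valid_gen p2" "concl p2 = add_mset (Bang B) (image_mset Wn (mset ws))"
    "valid_gen r" "concl r = add_mset (dual B) (add_mset (Wn (dual B)) \<Delta>)"
    "G = image_mset Wn (mset ws) + \<Delta>"
    using cp_abs1(2,1) by (rule valid_gen_cut_cp_absE)
  then show ?case
    using valid_gen_abs_list[of "mk_cut B p1 (mk_cut (Bang B) p2 r)" ws \<Delta>] by (simp add: ac_simps)
next
  case (cp_abs2 ws G1 B G p1 p2 G2 r)
  obtain \<Delta> where "valid_gen p1" "concl p1 = add_mset B (mset ws)"
    "valid_gen p2" "concl p2 = add_mset (Bang B) (image_mset Wn (mset ws))"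
    "valid_gen r" "concl r = add_mset (dual B) (add_mset (Wn (dual B)) \<Delta>)"
    "G = image_mset Wn (mset ws) + \<Delta>"
    using cp_abs2(2,1) by (rule valid_gen_cut_cp_absE)
  then show ?case
    using valid_gen_abs_list[of "mk_cut (Bang B) p2 (mk_cut B p1 r)" ws \<Delta>] by (simp add: ac_simps)
next
  case (c_all A G1 B G p D2)
  then show ?case
    by (auto simp: valid_gen_cut_iff valid_gen_dlift lift_dual dest!: multi_member_split)
next
  case (sym b A G D2 D1 D')
  from sym(3) have "valid_gen (Der (RCut (dual A)) G [D2, D1])"
    by (simp only: valid_gen_cut_swap)
  with sym(2) show ?case
    by simp
qed (auto simp: valid_gen_cut_iff dest!: multi_member_split)

lemma step_preserves_valid_gen:
  "step b D D' \<Longrightarrow> valid_gen D \<Longrightarrow> valid_gen D' \<and> concl D' = concl D"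
proof (induct rule: step.induct)
  case (root b D D')
  then show ?case by (rule root_step_preserves_valid_gen)
next
  case (ctxt i ps b D' r G)
  then have "valid_gen D'" "concl D' = concl (ps ! i)"
    by auto
  then have "map concl (ps[i := D']) = map concl ps"
    by (metis list_update_id map_update)
  with ctxt \<open>valid_gen D'\<close> show ?case
    by (auto dest: set_update_subset_insert[THEN subsetD])
qed

section \<open>Measures decreased by cut elimination\<close>

fun is_cp :: "rule \<Rightarrow> bool" where
  "is_cp (RCp A) = True"
| "is_cp _ = False"

fun cp_context_size :: "deriv \<Rightarrow> nat" where
  "cp_context_size (Der r G ps) = (if is_cp r then size G - 1 else 0) + sum_list (map cp_context_size ps)"

fun cut_weight :: "deriv \<Rightarrow> nat" where
  "cut_weight (Der r G ps) = (if is_cut r then dsize (Der r G ps) else 0) + sum_list (map cut_weight ps)"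

definition weight :: "deriv \<Rightarrow> nat" where
  "weight D = dsize D + cp_context_size D"

lemma is_cp_rsubst[simp]: "is_cp (rsubst k C r) = is_cp r"
  by (cases r) auto

lemma is_cut_rsubst[simp]: "is_cut (rsubst k C r) = is_cut r"
  by (cases r) auto

lemma is_cp_rlift[simp]: "is_cp (rlift k r) = is_cp r"
  by (cases r) auto

lemma is_cut_rlift[simp]: "is_cut (rlift k r) = is_cut r"
  by (cases r) auto

lemma measures_dsubst[simp]:
  "dsize (dsubst k C D) = dsize D" "cp_context_size (dsubst k C D) = cp_context_size D"
  "cut_weight (dsubst k C D) = cut_weight D"
  by (induct D arbitrary: k C) (simp_all add: o_def cong: map_cong)

lemma measures_dlift[simp]:
  "dsize (dlift k D) = dsize D" "cp_context_size (dlift k D) = cp_context_size D"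
  "cut_weight (dlift k D) = cut_weight D"
  by (induct D arbitrary: k) (simp_all add: o_def cong: map_cong)

lemma measures_mk_cut[simp]:
  "dsize (mk_cut A p q) = Suc (dsize p + dsize q)"
  "cp_context_size (mk_cut A p q) = cp_context_size p + cp_context_size q"
  "cut_weight (mk_cut A p q) = Suc (dsize p + dsize q) + cut_weight p + cut_weight q"
  by (simp_all add: mk_cut_def)

lemma measures_wk_list[simp]:
  "dsize (wk_list ws d) = length ws + dsize d" "cp_context_size (wk_list ws d) = cp_context_size d"
  by (induct ws) (auto simp: Let_def)

lemma measures_abs_list[simp]:
  "dsize (abs_list ws d) = length ws + dsize d" "cp_context_size (abs_list ws d) = cp_context_size d"
  by (induct ws) (auto simp: Let_def)

lemma length_cp_context:
  "image_mset Wn (mset ws) = G1 - {#Bang B#} \<Longrightarrow> G1 = add_mset (Bang B) \<Gamma> \<Longrightarrow> length ws = size \<Gamma>"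
  by (metis add_mset_remove_trivial size_image_mset size_mset)

text \<open>The size bound in the commutative case is needed because a cut further down counts the size
  of the whole subderivation in its cut weight.\<close>

lemma root_step_measures:
  "root_step b D D' \<Longrightarrow> valid_gen D \<Longrightarrow>
     (b \<longrightarrow> weight D' < weight D) \<and>
     (\<not> b \<longrightarrow> dsize D' \<le> dsize D \<and> cp_context_size D' \<le> cp_context_size D \<and> cut_weight D' < cut_weight D)"
proof (induct rule: root_step.induct)
  case (cp_cp E G B G1 p1 p2 G2 q1 q2)
  then obtain \<Gamma>1 \<Gamma>2 where
      "G1 = add_mset (Bang B) (image_mset Wn (add_mset E \<Gamma>1))"
      "G2 = add_mset (Bang (dual E)) (image_mset Wn \<Gamma>2)"
      "G = add_mset (Bang B) (image_mset Wn (\<Gamma>1 + \<Gamma>2))"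
    by (rule valid_gen_cut_cp_cpE)
  then show ?case
    by (simp add: weight_def)
next
  case (cp_wk ws G1 B G p1 p2 G2 r)
  then show ?case
    by (auto simp: weight_def valid_gen_cut_iff dest: length_cp_context)
next
  case (cp_abs1 ws G1 B G p1 p2 G2 r)
  then show ?case
    by (auto simp: weight_def valid_gen_cut_iff dest: length_cp_context)
next
  case (cp_abs2 ws G1 B G p1 p2 G2 r)
  then show ?case
    by (auto simp: weight_def valid_gen_cut_iff dest: length_cp_context)
next
  case (sym b A G D2 D1 D')
  from sym(3) have "valid_gen (Der (RCut (dual A)) G [D2, D1])"
    by (simp only: valid_gen_cut_swap)
  with sym(2) show ?case
    by (simp add: weight_def ac_simps)
qed (auto simp: weight_def)

lemma sum_list_map_update:
  fixes f :: "'a \<Rightarrow> 'b::comm_monoid_add"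
  shows "i < length xs \<Longrightarrow> sum_list (map f (xs[i := x])) + f (xs ! i) = sum_list (map f xs) + f x"
  by (induct xs arbitrary: i) (auto simp: ac_simps split: nat.split)

lemma step_measures:
  "step b D D' \<Longrightarrow> valid_gen D \<Longrightarrow>
     (b \<longrightarrow> weight D' < weight D) \<and>
     (\<not> b \<longrightarrow> dsize D' \<le> dsize D \<and> cp_context_size D' \<le> cp_context_size D \<and> cut_weight D' < cut_weight D)"
proof (induct rule: step.induct)
  case (root b D D')
  then show ?case by (rule root_step_measures)
next
  case (ctxt i ps b D' r G)
  then have "(b \<longrightarrow> weight D' < weight (ps ! i)) \<and>
     (\<not> b \<longrightarrow> dsize D' \<le> dsize (ps ! i) \<and> cp_context_size D' \<le> cp_context_size (ps ! i) \<and>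
        cut_weight D' < cut_weight (ps ! i))"
    by auto
  then show ?case
    using sum_list_map_update[OF ctxt(1), of dsize D'] sum_list_map_update[OF ctxt(1), of cp_context_size D']
      sum_list_map_update[OF ctxt(1), of cut_weight D']
    by (auto simp: weight_def)
qed

lemma principal_step_weight_less: "step True D D' \<Longrightarrow> valid_gen D \<Longrightarrow> weight D' < weight D"
  using step_measures[of True D D'] by simp

lemma commutative_step_measures:
  "step False D D' \<Longrightarrow> valid_gen D \<Longrightarrow> weight D' \<le> weight D \<and> cut_weight D' < cut_weight D"
  using step_measures[of False D D'] by (simp add: weight_def)

lemma dsize_pos: "0 < dsize D"
  by (cases D) auto

lemma cut_weight_le_dsize_sq: "cut_weight D \<le> dsize D ^ 2"
proof (induct D)
  case (Der r G ps)
  let ?s = "sum_list (map dsize ps)"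
  have "sum_list (map cut_weight ps) \<le> sum_list (map (\<lambda>p. dsize p ^ 2) ps)"
    using Der by (intro sum_list_mono) auto
  also have "\<dots> \<le> ?s ^ 2"
    by (induct ps) (auto simp: power2_sum)
  finally have "cut_weight (Der r G ps) \<le> Suc ?s + ?s ^ 2"
    by simp
  also have "\<dots> \<le> (Suc ?s) ^ 2"
    by (simp add: power2_eq_square)
  finally show ?case by simp
qed

lemma cut_weight_le_weight_sq: "cut_weight D \<le> weight D ^ 2"
proof -
  have "dsize D ^ 2 \<le> weight D ^ 2"
    by (rule power_mono) (simp_all add: weight_def)
  then show ?thesis
    using cut_weight_le_dsize_sq[of D] by linarith
qed

lemma valid_nodes_rule_ok: "valid D \<Longrightarrow> (r, G) \<in> set (nodes D) \<Longrightarrow> \<exists>cs. rule_ok r G cs"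
  by (induct arbitrary: r G rule: valid.induct) auto

lemma cp_wn_count_le_S: "(RCp A, G) \<in> set (nodes D) \<Longrightarrow> size (filter_mset is_Wn G) \<le> S D"
proof -
  assume node: "(RCp A, G) \<in> set (nodes D)"
  have "finite {size (filter_mset is_Wn G) | A G. (RCp A, G) \<in> set (nodes D)}"
    by (rule finite_subset[of _ "(\<lambda>(r, G). size (filter_mset is_Wn G)) ` set (nodes D)"]) force+
  with node show ?thesis
    unfolding S_def by (intro Max_ge) auto
qed

lemma cp_context_size_le:
  "(\<And>A G. (RCp A, G) \<in> set (nodes D) \<Longrightarrow> size G - 1 \<le> s) \<Longrightarrow> cp_context_size D \<le> s * dsize D"
proof (induct D)
  case (Der r G ps)
  have "sum_list (map cp_context_size ps) \<le> sum_list (map (\<lambda>p. s * dsize p) ps)"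
    using Der by (intro sum_list_mono) auto
  also have "\<dots> = s * sum_list (map dsize ps)"
    by (simp add: sum_list_const_mult)
  finally have "sum_list (map cp_context_size ps) \<le> s * sum_list (map dsize ps)" .
  moreover have "(if is_cp r then size G - 1 else 0) \<le> s"
    using Der(2)[of _ G] by (cases r) fastforce+
  ultimately show ?case
    by simp
qed

lemma weight_le_S: "valid D \<Longrightarrow> weight D \<le> (S D + 1) * dsize D"
proof -
  assume "valid D"
  have "size G - 1 \<le> S D" if node: "(RCp A, G) \<in> set (nodes D)" for A G
  proof -
    from valid_nodes_rule_ok[OF \<open>valid D\<close> node] obtain \<Gamma> where "G = image_mset Wn \<Gamma> + {#Bang A#}"
      by auto
    then have "size G - 1 = size (filter_mset is_Wn G)"
      by (simp add: filter_mset_image_mset)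
    with node show ?thesis
      by (simp add: cp_wn_count_le_S)
  qed
  then show ?thesis
    using cp_context_size_le[of D "S D"] by (simp add: weight_def)
qed

lemma potential_bound:
  fixes f :: "'a \<Rightarrow> nat"
  assumes "\<And>i. Suc i < length xs \<Longrightarrow> f (xs ! Suc i) + c \<le> f (xs ! i)"
  shows "i < length xs \<Longrightarrow> f (xs ! i) + c * i \<le> f (xs ! 0)"
proof (induct i)
  case (Suc i)
  then show ?case
    using assms[of i] by simp
qed simp

lemma red_seq_valid_gen:
  assumes "red_seq R Ds" "\<And>D D'. R D D' \<Longrightarrow> \<exists>b. step b D D'" "valid_gen (hd Ds)"
  shows "i < length Ds \<Longrightarrow> valid_gen (Ds ! i)"
proof (induct i)
  case 0
  with assms show ?case by (simp add: hd_conv_nth)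
next
  case (Suc i)
  with assms(1,2) obtain b where "step b (Ds ! i) (Ds ! Suc i)"
    unfolding red_seq_def by blast
  with Suc show ?case
    using step_preserves_valid_gen by simp
qed

lemma principal_red_seq_weight:
  assumes "red_seq principal_step Ds" "valid_gen (hd Ds)" "i < length Ds"
  shows "weight (Ds ! i) + i \<le> weight (hd Ds)"
proof -
  have "weight (Ds ! Suc j) + 1 \<le> weight (Ds ! j)" if "Suc j < length Ds" for j
    using that assms(1) principal_step_weight_less red_seq_valid_gen[OF assms(1) _ assms(2), of j]
    unfolding red_seq_def principal_step_def by fastforce
  with assms(1,3) show ?thesis
    using potential_bound[of Ds weight 1 i] by (simp add: red_seq_def hd_conv_nth)
qed

lemma step_weight_le: "step b D D' \<Longrightarrow> valid_gen D \<Longrightarrow> weight D' \<le> weight D"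
  by (cases b) (auto dest: principal_step_weight_less commutative_step_measures)

lemma step_potential_decrease:
  assumes "step b D D'" "valid_gen D" "cut_weight D' < K"
  shows "weight D' * K + cut_weight D' + 1 \<le> weight D * K + cut_weight D"
proof (cases b)
  case True
  with assms(1,2) have "weight D' + 1 \<le> weight D"
    using principal_step_weight_less by fastforce
  then have "(weight D' + 1) * K \<le> weight D * K"
    by (rule mult_right_mono) simp
  with assms(3) show ?thesis
    by (simp add: algebra_simps)
next
  case False
  with assms(1,2) have "weight D' \<le> weight D" "cut_weight D' < cut_weight D"
    using commutative_step_measures by auto
  moreover from this(1) have "weight D' * K \<le> weight D * K"
    by (rule mult_right_mono) simp
  ultimately show ?thesis
    by linarith
qed

lemma cut_red_seq_potential:
  assumes "red_seq cut_step Ds" "valid_gen (hd Ds)" "i < length Ds"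
  defines "K \<equiv> weight (hd Ds) ^ 2 + 1"
  shows "weight (Ds ! i) \<le> weight (hd Ds)"
    and "weight (Ds ! i) * K + cut_weight (Ds ! i) + i \<le> weight (hd Ds) * K + cut_weight (hd Ds)"
proof -
  have hd: "hd Ds = Ds ! 0"
    using assms(1) by (simp add: red_seq_def hd_conv_nth)
  have step: "\<exists>b. step b (Ds ! j) (Ds ! Suc j)" if "Suc j < length Ds" for j
    using assms(1) that unfolding red_seq_def cut_step_def by blast
  have valid: "valid_gen (Ds ! j)" if "j < length Ds" for j
    using red_seq_valid_gen[OF assms(1) _ assms(2) that] unfolding cut_step_def by blast
  have "weight (Ds ! Suc j) \<le> weight (Ds ! j)" if "Suc j < length Ds" for j
    using step[OF that] valid[of j] that step_weight_le by force
  then have weight_le: "weight (Ds ! j) \<le> weight (hd Ds)" if "j < length Ds" for j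
    using potential_bound[of Ds weight 0 j] that hd by simp
  then show "weight (Ds ! i) \<le> weight (hd Ds)"
    using assms(3) .
  have cut_weight_less: "cut_weight (Ds ! j) < K" if "j < length Ds" for j
  proof -
    have "cut_weight (Ds ! j) \<le> weight (Ds ! j) ^ 2"
      by (rule cut_weight_le_weight_sq)
    also have "\<dots> \<le> weight (hd Ds) ^ 2"
      using weight_le[OF that] by (simp add: power_mono)
    finally show ?thesis
      unfolding K_def by simp
  qed
  have "weight (Ds ! Suc j) * K + cut_weight (Ds ! Suc j) + 1 \<le> weight (Ds ! j) * K + cut_weight (Ds ! j)"
    if "Suc j < length Ds" for j
    using step[OF that] valid[of j] cut_weight_less[OF that] that step_potential_decrease by force
  then show "weight (Ds ! i) * K + cut_weight (Ds ! i) + i \<le> weight (hd Ds) * K + cut_weight (hd Ds)"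
    using potential_bound[of Ds "\<lambda>D. weight D * K + cut_weight D" 1 i] assms(3) hd by simp
qed

section \<open>Cut-free normal forms\<close>

text \<open>The whole conclusion of a cp rule counts as principal: a cut is never permuted above cp.\<close>

fun principal_in :: "form \<Rightarrow> deriv \<Rightarrow> bool" where
  "principal_in A (Der (RTens B C) _ _) = (A = Tens B C)"
| "principal_in A (Der (RPar B C) _ _) = (A = Par B C)"
| "principal_in A (Der ROne _ _) = (A = One)"
| "principal_in A (Der RBot _ _) = (A = Bot)"
| "principal_in A (Der (RWk B) _ _) = (A = Wn B)"
| "principal_in A (Der (RAbs B) _ _) = (A = Wn B)"
| "principal_in A (Der (RAll B) _ _) = (A = All B)"
| "principal_in A (Der (REx B C) _ _) = (A = Ex B)"
| "principal_in A (Der (RCp B) G _) = (A \<in># G)"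
| "principal_in A (Der _ _ _) = False"

lemma cut_commutes_or_principal:
  assumes "valid_gen (Der r G1 ps)" "\<not> is_cut r" "A \<in># G1" "\<not> principal_in A (Der r G1 ps)"
  shows "\<exists>b E. root_step b (Der (RCut A) G [Der r G1 ps, D2]) E"
  using assms
  by (cases r; force intro: root_step.ax root_step.c_tens1 root_step.c_tens2 root_step.c_par
      root_step.c_bot root_step.c_wk root_step.c_abs root_step.c_ex root_step.c_all root_step.c_hyp
      simp: add_mset_commute)

lemma root_step_swap:
  "root_step b (Der (RCut (dual A)) G [D2, D1]) E \<longleftrightarrow> root_step b (Der (RCut A) G [D1, D2]) E"
  using root_step.sym[of b A] root_step.sym[of b "dual A"] by auto

lemma cut_principal_reducible_bang:
  assumes "valid_gen D1" "valid_gen D2" "principal_in (Bang B) D1" "principal_in (Wn (dual B)) D2"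
  shows "\<exists>b E. root_step b (Der (RCut (Bang B)) G [D1, D2]) E"
proof -
  from assms(1,3) obtain G1 p1 p2 \<Gamma> where
      D1: "D1 = Der (RCp B) G1 [p1, p2]" and "G1 = add_mset (Bang B) (image_mset Wn \<Gamma>)"
    by (cases "(Bang B, D1)" rule: principal_in.cases) auto
  then obtain ws where ws: "image_mset Wn (mset ws) = G1 - {#Bang B#}"
    using ex_mset[of \<Gamma>] by auto
  from assms(2,4) consider
      (wk) G2 r where "D2 = Der (RWk (dual B)) G2 [r]"
    | (abs) G2 r where "D2 = Der (RAbs (dual B)) G2 [r]"
    | (cp) C G2 q1 q2 where "D2 = Der (RCp C) G2 [q1, q2]"
    by (cases "(Wn (dual B), D2)" rule: principal_in.cases) auto
  then show ?thesis
  proof cases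
    case wk
    with D1 ws show ?thesis by (blast intro: root_step.cp_wk)
  next
    case abs
    with D1 ws show ?thesis by (blast intro: root_step.cp_abs1)
  next
    case cp
    have "root_step True (Der (RCut (Wn (dual B))) G [D2, D1])
        (Der (RCp C) G [mk_cut (dual B) q1 p1, mk_cut (Wn (dual B)) q2 p2])"
      unfolding cp D1 using root_step.cp_cp[of "dual B"] by simp
    then show ?thesis
      unfolding root_step_swap[of _ "Bang B", symmetric] by auto
  qed
qed

lemma cut_principal_reducible_left:
  assumes "valid_gen D1" "valid_gen D2" "principal_in A D1" "principal_in (dual A) D2"
    and "A = Tens B C \<or> A = One \<or> A = All B \<or> A = Bang B"
  shows "\<exists>b E. root_step b (Der (RCut A) G [D1, D2]) E"
  using assms(5)
proof (elim disjE)
  assume A: "A = Tens B C"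
  from assms obtain G1 p q where "D1 = Der (RTens B C) G1 [p, q]"
    unfolding A by (cases "(Tens B C, D1)" rule: principal_in.cases) auto
  moreover from assms obtain G2 r where "D2 = Der (RPar (dual B) (dual C)) G2 [r]"
    unfolding A by (cases "(Par (dual B) (dual C), D2)" rule: principal_in.cases) auto
  ultimately show ?thesis
    unfolding A by (blast intro: root_step.tens_par)
next
  assume A: "A = One"
  from assms obtain G1 where "D1 = Der ROne G1 []"
    unfolding A by (cases "(One, D1)" rule: principal_in.cases) auto
  moreover from assms obtain G2 r where "D2 = Der RBot G2 [r]"
    unfolding A by (cases "(Bot, D2)" rule: principal_in.cases) auto
  ultimately show ?thesis
    unfolding A by (blast intro: root_step.one_bot)
next
  assume A: "A = All B"
  from assms obtain G1 p where "D1 = Der (RAll B) G1 [p]"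
    unfolding A by (cases "(All B, D1)" rule: principal_in.cases) auto
  moreover from assms obtain G2 C r where "D2 = Der (REx (dual B) C) G2 [r]"
    unfolding A by (cases "(Ex (dual B), D2)" rule: principal_in.cases) auto
  ultimately show ?thesis
    unfolding A by (blast intro: root_step.all_ex)
next
  assume "A = Bang B"
  with assms show ?thesis
    using cut_principal_reducible_bang[of D1 D2 B G] by simp
qed

lemma cut_principal_reducible:
  assumes "valid_gen D1" "valid_gen D2" "principal_in A D1" "principal_in (dual A) D2"
  shows "\<exists>b E. root_step b (Der (RCut A) G [D1, D2]) E"
proof -
  have direct: ?thesis if "A = Tens B C \<or> A = One \<or> A = All B \<or> A = Bang B" for B C
    using assms that by (rule cut_principal_reducible_left)
  have swapped: ?thesis if "dual A = Tens B C \<or> dual A = One \<or> dual A = All B \<or> dual A = Bang B" for B C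
    using cut_principal_reducible_left[OF assms(2,1,4) _ that, of G] assms(3)
    by (simp add: root_step_swap)
  have "A \<noteq> Var n" "A \<noteq> NVar n" for n
    using assms(1,3) by (cases "(A, D1)" rule: principal_in.cases; auto)+
  then have "\<exists>B C. (A = Tens B C \<or> A = One \<or> A = All B \<or> A = Bang B) \<or>
      (dual A = Tens B C \<or> dual A = One \<or> dual A = All B \<or> dual A = Bang B)"
    by (cases A) auto
  then show ?thesis
    using direct swapped by blast
qed

lemma cut_free_Der[simp]: "cut_free (Der r G ps) \<longleftrightarrow> \<not> is_cut r \<and> (\<forall>p\<in>set ps. cut_free p)"
  unfolding cut_free_def by auto

lemma cut_of_cut_free_reducible:
  assumes "valid_gen (Der (RCut A) G [D1, D2])" "cut_free D1" "cut_free D2"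
  shows "\<exists>b E. root_step b (Der (RCut A) G [D1, D2]) E"
proof -
  obtain r1 G1 ps1 r2 G2 ps2 where D: "D1 = Der r1 G1 ps1" "D2 = Der r2 G2 ps2"
    by (meson deriv.exhaust)
  from assms have prems: "valid_gen D1" "valid_gen D2" "A \<in># G1" "dual A \<in># G2" "\<not> is_cut r1" "\<not> is_cut r2"
    unfolding valid_gen_cut_iff D by auto
  show ?thesis
  proof (cases "principal_in A D1 \<and> principal_in (dual A) D2")
    case True
    with prems show ?thesis by (blast intro: cut_principal_reducible)
  next
    case False
    with prems show ?thesis
      using cut_commutes_or_principal[of r1 G1 ps1 A G D2] cut_commutes_or_principal[of r2 G2 ps2 "dual A" G D1]
      unfolding D root_step_swap[of _ A, symmetric] by auto
  qed
qed

lemma not_cut_free_reducible: "valid_gen D \<Longrightarrow> \<not> cut_free D \<Longrightarrow> \<exists>b E. step b D E"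
proof (induct D)
  case (Der r G ps)
  show ?case
  proof (cases "\<forall>p\<in>set ps. cut_free p")
    case True
    with Der.prems obtain A D1 D2 where "r = RCut A" "ps = [D1, D2]" "cut_free D1" "cut_free D2"
      by (cases r) auto
    with Der.prems show ?thesis
      using cut_of_cut_free_reducible by (blast intro: step.root)
  next
    case False
    then obtain i where i: "i < length ps" "\<not> cut_free (ps ! i)"
      by (metis in_set_conv_nth)
    with Der obtain b E where "step b (ps ! i) E"
      by (meson nth_mem valid_gen.simps)
    with i show ?thesis
      by (blast intro: step.ctxt)
  qed
qed

section \<open>Complexity of cut elimination\<close>

lemma cubic_potential_le:
  fixes W Q C :: nat
  assumes "1 \<le> Q" "W \<le> Q" "C \<le> W ^ 2"
  shows "W * (W ^ 2 + 1) + C \<le> 3 * Q ^ 3"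
proof -
  have "W * (W ^ 2 + 1) + C \<le> W ^ 3 + W ^ 2 + W"
    using assms(3) by (simp add: algebra_simps power2_eq_square power3_eq_cube)
  also have "\<dots> \<le> Q ^ 3 + Q ^ 3 + Q ^ 3"
  proof (intro add_mono)
    show "W ^ 3 \<le> Q ^ 3"
      using assms(2) by (rule power_mono) simp
    have "W ^ 2 \<le> Q ^ 2"
      using assms(2) by (rule power_mono) simp
    then show "W ^ 2 \<le> Q ^ 3"
      using power_increasing[of 2 3 Q] assms(1) by linarith
    show "W \<le> Q ^ 3"
      using assms(1,2) power_increasing[of 1 3 Q] by simp
  qed
  finally show ?thesis
    by simp
qed

lemma cut_red_seq_bounds:
  assumes "red_seq cut_step Ds" "valid (hd Ds)"
  shows "length Ds - 1 \<le> 3 * (S (hd Ds) + 1) ^ 3 * dsize (hd Ds) ^ 3"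
    and "E \<in> set Ds \<Longrightarrow> dsize E \<le> 3 * (S (hd Ds) + 1) ^ 3 * dsize (hd Ds) ^ 3"
proof -
  let ?W = "weight (hd Ds)" and ?Q = "(S (hd Ds) + 1) * dsize (hd Ds)"
  have valid: "valid_gen (hd Ds)"
    using assms(2) by (rule valid_imp_valid_gen)
  have W: "?W \<le> ?Q"
    using assms(2) by (rule weight_le_S)
  have Q: "1 \<le> ?Q"
    using dsize_pos[of "hd Ds"] by simp
  have Q3: "3 * ?Q ^ 3 = 3 * (S (hd Ds) + 1) ^ 3 * dsize (hd Ds) ^ 3"
    by (simp only: power_mult_distrib mult.assoc)
  have "length Ds - 1 < length Ds"
    using assms(1) by (simp add: red_seq_def)
  then have "length Ds - 1 \<le> ?W * (?W ^ 2 + 1) + cut_weight (hd Ds)"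
    using cut_red_seq_potential(2)[OF assms(1) valid] by fastforce
  also have "\<dots> \<le> 3 * ?Q ^ 3"
    using Q W cut_weight_le_weight_sq by (rule cubic_potential_le)
  finally show "length Ds - 1 \<le> 3 * (S (hd Ds) + 1) ^ 3 * dsize (hd Ds) ^ 3"
    using Q3 by simp
  assume "E \<in> set Ds"
  then obtain i where i: "i < length Ds" "E = Ds ! i"
    by (metis in_set_conv_nth)
  have "dsize E \<le> weight E"
    by (simp add: weight_def)
  also have "\<dots> \<le> ?W"
    using cut_red_seq_potential(1)[OF assms(1) valid i(1)] i(2) by simp
  also have "\<dots> \<le> ?Q ^ 3"
    using W Q power_increasing[of 1 3 ?Q] by simp
  finally show "dsize E \<le> 3 * (S (hd Ds) + 1) ^ 3 * dsize (hd Ds) ^ 3"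
    using Q3 by simp
qed

lemma principal_red_seq_bounds:
  assumes "red_seq principal_step Ds" "valid (hd Ds)"
  shows "length Ds - 1 \<le> (S (hd Ds) + 1) * dsize (hd Ds)"
    and "E \<in> set Ds \<Longrightarrow> dsize E \<le> (S (hd Ds) + 1) * dsize (hd Ds)"
proof -
  have valid: "valid_gen (hd Ds)"
    using assms(2) by (rule valid_imp_valid_gen)
  have W: "weight (hd Ds) \<le> (S (hd Ds) + 1) * dsize (hd Ds)"
    using assms(2) by (rule weight_le_S)
  have "length Ds - 1 < length Ds"
    using assms(1) by (simp add: red_seq_def)
  with W show "length Ds - 1 \<le> (S (hd Ds) + 1) * dsize (hd Ds)"
    using principal_red_seq_weight[OF assms(1) valid] by fastforce
  assume "E \<in> set Ds"
  then obtain i where "i < length Ds" "E = Ds ! i"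
    by (metis in_set_conv_nth)
  with W show "dsize E \<le> (S (hd Ds) + 1) * dsize (hd Ds)"
    using principal_red_seq_weight[OF assms(1) valid] by (fastforce simp: weight_def)
qed

lemma maximal_red_seq_cut_free:
  assumes "red_seq cut_step Ds" "valid (hd Ds)" "\<not> (\<exists>E. cut_step (last Ds) E)"
  shows "cut_free (last Ds)"
proof -
  have "valid_gen (last Ds)"
    using red_seq_valid_gen[OF assms(1) _ valid_imp_valid_gen[OF assms(2)], of "length Ds - 1"] assms(1)
    by (auto simp: cut_step_def red_seq_def last_conv_nth)
  with assms(3) show ?thesis
    using not_cut_free_reducible unfolding cut_step_def by (metis (full_types))
qed

theorem mainTheorem5:
  shows
  "(\<exists>c::nat. \<forall>Ds. red_seq cut_step Ds \<and> valid (hd Ds) \<longrightarrow>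
       length Ds - 1 \<le> c * (S (hd Ds) + 1) ^ 3 * dsize (hd Ds) ^ 3 \<and>
       (\<forall>E \<in> set Ds. dsize E \<le> c * (S (hd Ds) + 1) ^ 3 * dsize (hd Ds) ^ 3))
 \<and> (\<exists>c::nat. \<forall>Ds. red_seq principal_step Ds \<and> valid (hd Ds) \<longrightarrow>
       length Ds - 1 \<le> c * (S (hd Ds) + 1) * dsize (hd Ds) \<and>
       (\<forall>E \<in> set Ds. dsize E \<le> c * (S (hd Ds) + 1) * dsize (hd Ds)))
 \<and> (\<forall>Ds. red_seq cut_step Ds \<and> valid (hd Ds) \<and> \<not> (\<exists>E. cut_step (last Ds) E) \<longrightarrow>
       cut_free (last Ds))"
proof (intro conjI)
  show "\<exists>c::nat. \<forall>Ds. red_seq cut_step Ds \<and> valid (hd Ds) \<longrightarrow>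
       length Ds - 1 \<le> c * (S (hd Ds) + 1) ^ 3 * dsize (hd Ds) ^ 3 \<and>
       (\<forall>E \<in> set Ds. dsize E \<le> c * (S (hd Ds) + 1) ^ 3 * dsize (hd Ds) ^ 3)"
    using cut_red_seq_bounds by blast
  show "\<exists>c::nat. \<forall>Ds. red_seq principal_step Ds \<and> valid (hd Ds) \<longrightarrow>
       length Ds - 1 \<le> c * (S (hd Ds) + 1) * dsize (hd Ds) \<and>
       (\<forall>E \<in> set Ds. dsize E \<le> c * (S (hd Ds) + 1) * dsize (hd Ds))"
    using principal_red_seq_bounds by (intro exI[of _ 1]) simp
qed (use maximal_red_seq_cut_free in blast)

end
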